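(* Let $\beta,\kappa\ge0$. Let $\hat\sigma\sim\mu_{N,\beta,\kappa}$ and $\hat\sigma'\sim\mu_{N,\infty,\kappa}$ be independent, let $E=E_{\hat\sigma,\hat\sigma'}$, and set $\sigma=\hat\sigma$ and $\sigma'=\hat\sigma'|_E+\hat\sigma|_{E_N\setminus E}$. Then $\sigma'$ has law $\mu_{N,\infty,\kappa}$; thus the law $\mu_{N,(\beta,\kappa),(\infty,\kappa)}$ of $(\sigma,\sigma')$ is a coupling of $\mu_{N,\beta,\kappa}$ and $\mu_{N,\infty,\kappa}$.
   Context: $G=\mathbb Z_n$, $\rho$ faithful unitary one-dimensional. On $\mathbb Z^4$: $E_N,P_N$ oriented edges/plaquettes with vertices in $B_N=[-N,N]^4\cap\mathbb Z^4$; $\partial p$ oriented boundary edges; $\hat\partial e=\{p:e\in\partial p\}$. $\Sigma_{E_N}$: $\sigma:E_N\to G$, $\sigma_{-e}=-\sigma_e$, $(d\sigma)_p=\sum_{e\in\partial p}\sigma_e$; $\Sigma^0_{E_N}=\{d\sigma=0\}$. $\mu_{N,\beta,\kappa}(\sigma)\propto\exp(\beta\sum_{p\in P_N}\rho((d\sigma)_p)+\kappa\sum_{e\in E_N}\rho(\sigma_e))$ on $\Sigma_{E_N}$; $\mu_{N,\infty,\kappa}(\sigma)\propto\exp(\kappa\sum_{e\in E_N}\rho(\sigma_e))$ on $\Sigma^0_{E_N}$. $f|_S$ equals $f$ on $S$ and $0$ elsewhere. $\mathcal G(\sigma,\sigma')$ is the graph on $E_N$ with an edge between distinct $e,e'$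 if $e'=-e$, or $e,e'\in\mathrm{supp}\,\sigma\cup\mathrm{supp}\,\sigma'$ and ($\hat\partial e\cap\hat\partial e'\ne\emptyset$ or $\hat\partial e\cap\hat\partial(-e')\ne\emptyset$); $\mathcal C_{\mathcal G}(A)$ is the union of components meeting $A$; $E_{\sigma,\sigma'}=\mathcal C_{\mathcal G(\sigma,\sigma')}(\mathrm{supp}\,\sigma\cap\bigcup_{p\in\mathrm{supp}\,d\sigma}\partial p)$. *)

theory Defs
  imports Complex_Main
begin

(* Lattice Z^4: a vertex is a function nat => int vanishing at coordinates >= 4. *)
type_synonym vtx = "nat \<Rightarrow> int"
(* an oriented edge is an ordered pair (tail, head) of nearest-neighbour vertices *)
type_synonym edge = "vtx \<times> vtx"
(* an oriented plaquette (x, j, k), j \<noteq> k: the unit square with lowest corner x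
   spanned by directions j,k, traversed x -> x+e_j -> x+e_j+e_k -> x+e_k -> x.
   (x,k,j) is the same square with the opposite orientation. *)
type_synonym plaq = "vtx \<times> nat \<times> nat"

definition lat :: "vtx set" where
  "lat = {x. \<forall>i\<ge>4. x i = 0}"

definition step :: "vtx \<Rightarrow> nat \<Rightarrow> vtx" where
  "step x j = x(j := x j + 1)"

definition box :: "nat \<Rightarrow> vtx set" where
  "box N = {x \<in> lat. \<forall>i<4. \<bar>x i\<bar> \<le> int N}"

definition edges :: "nat \<Rightarrow> edge set" where
  "edges N = {(a, b). a \<in> box N \<and> b \<in> box N \<and>
                 (\<exists>j<4. b = step a j \<or> a = step b j)}"

definition rev_edge :: "edge \<Rightarrow> edge" where
  "rev_edge e = (snd e, fst e)"

definition is_plaq :: "plaq \<Rightarrow> bool" where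
  "is_plaq p = (case p of (x, j, k) \<Rightarrow> x \<in> lat \<and> j < 4 \<and> k < 4 \<and> j \<noteq> k)"

definition bd :: "plaq \<Rightarrow> edge list" where
  "bd p = (case p of (x, j, k) \<Rightarrow>
      [(x, step x j), (step x j, step (step x j) k),
       (step (step x j) k, step x k), (step x k, x)])"

definition plaqs :: "nat \<Rightarrow> plaq set" where
  "plaqs N = {p. is_plaq p \<and> set (bd p) \<subseteq> edges N}"

definition cobd :: "edge \<Rightarrow> plaq set" where
  "cobd e = {p. is_plaq p \<and> e \<in> set (bd p)}"

(* G = Z_n, elements represented by 0..n-1; configurations on E_N (zero off E_N) *)
definition configs :: "nat \<Rightarrow> int \<Rightarrow> (edge \<Rightarrow> int) set" where
  "configs N n = {\<sigma>. (\<forall>e \<in> edges N. \<sigma> e \<in> {0..<n}) \<and> (\<forall>e. e \<notin> edges N \<longrightarrow> \<sigma> e = 0)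
                    \<and> (\<forall>e \<in> edges N. \<sigma> (rev_edge e) = (- \<sigma> e) mod n)}"

definition dcurl :: "int \<Rightarrow> (edge \<Rightarrow> int) \<Rightarrow> plaq \<Rightarrow> int" where
  "dcurl n \<sigma> p = (\<Sum>e\<leftarrow>bd p. \<sigma> e) mod n"

definition configs0 :: "nat \<Rightarrow> int \<Rightarrow> (edge \<Rightarrow> int) set" where
  "configs0 N n = {\<sigma> \<in> configs N n. \<forall>p \<in> plaqs N. dcurl n \<sigma> p = 0}"

(* The sums over oriented plaquettes/edges of \<rho> are real (both orientations occur);
   we take Re explicitly. *)
definition weight :: "nat \<Rightarrow> int \<Rightarrow> (int \<Rightarrow> complex) \<Rightarrow> real \<Rightarrow> real \<Rightarrow> (edge \<Rightarrow> int) \<Rightarrow> real" where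
  "weight N n \<rho> \<beta> \<kappa> \<sigma> = exp (\<beta> * Re (\<Sum>p \<in> plaqs N. \<rho> (dcurl n \<sigma> p))
                                + \<kappa> * Re (\<Sum>e \<in> edges N. \<rho> (\<sigma> e)))"

definition weight_inf :: "nat \<Rightarrow> (int \<Rightarrow> complex) \<Rightarrow> real \<Rightarrow> (edge \<Rightarrow> int) \<Rightarrow> real" where
  "weight_inf N \<rho> \<kappa> \<sigma> = exp (\<kappa> * Re (\<Sum>e \<in> edges N. \<rho> (\<sigma> e)))"

definition mu :: "nat \<Rightarrow> int \<Rightarrow> (int \<Rightarrow> complex) \<Rightarrow> real \<Rightarrow> real \<Rightarrow> (edge \<Rightarrow> int) \<Rightarrow> real" where
  "mu N n \<rho> \<beta> \<kappa> \<sigma> = (if \<sigma> \<in> configs N n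
      then weight N n \<rho> \<beta> \<kappa> \<sigma> / (\<Sum>\<tau> \<in> configs N n. weight N n \<rho> \<beta> \<kappa> \<tau>) else 0)"

definition mu_inf :: "nat \<Rightarrow> int \<Rightarrow> (int \<Rightarrow> complex) \<Rightarrow> real \<Rightarrow> (edge \<Rightarrow> int) \<Rightarrow> real" where
  "mu_inf N n \<rho> \<kappa> \<sigma> = (if \<sigma> \<in> configs0 N n
      then weight_inf N \<rho> \<kappa> \<sigma> / (\<Sum>\<tau> \<in> configs0 N n. weight_inf N \<rho> \<kappa> \<tau>) else 0)"

definition supp :: "(edge \<Rightarrow> int) \<Rightarrow> edge set" where
  "supp \<sigma> = {e. \<sigma> e \<noteq> 0}"

definition cgraph :: "nat \<Rightarrow> (edge \<Rightarrow> int) \<Rightarrow> (edge \<Rightarrow> int) \<Rightarrow> (edge \<times> edge) set" where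
  "cgraph N \<sigma> \<sigma>' = {(e, e'). e \<in> edges N \<and> e' \<in> edges N \<and> e \<noteq> e' \<and>
      (e' = rev_edge e \<or>
       (e \<in> supp \<sigma> \<union> supp \<sigma>' \<and> e' \<in> supp \<sigma> \<union> supp \<sigma>' \<and>
        (cobd e \<inter> cobd e' \<noteq> {} \<or> cobd e \<inter> cobd (rev_edge e') \<noteq> {})))}"

definition comps_meeting :: "nat \<Rightarrow> (edge \<times> edge) set \<Rightarrow> edge set \<Rightarrow> edge set" where
  "comps_meeting N R A = {e \<in> edges N. \<exists>a \<in> A \<inter> edges N. (a, e) \<in> R\<^sup>*}"

definition Ecoup :: "nat \<Rightarrow> int \<Rightarrow> (edge \<Rightarrow> int) \<Rightarrow> (edge \<Rightarrow> int) \<Rightarrow> edge set" where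
  "Ecoup N n \<sigma> \<sigma>' = comps_meeting N (cgraph N \<sigma> \<sigma>')
      (supp \<sigma> \<inter> (\<Union>p \<in> {p \<in> plaqs N. dcurl n \<sigma> p \<noteq> 0}. set (bd p)))"

definition restr :: "(edge \<Rightarrow> int) \<Rightarrow> edge set \<Rightarrow> edge \<Rightarrow> int" where
  "restr f S e = (if e \<in> S then f e else 0)"

(* \<sigma>' = \<hat>\<sigma>'|_E + \<hat>\<sigma>|_{E_N \ E}, addition in Z_n *)
definition couple :: "nat \<Rightarrow> int \<Rightarrow> (edge \<Rightarrow> int) \<Rightarrow> (edge \<Rightarrow> int) \<Rightarrow> (edge \<Rightarrow> int)" where
  "couple N n s s' = (let E = Ecoup N n s s' in
      (\<lambda>e. (restr s' E e + restr s (edges N - E) e) mod n))"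

end

theory Submission imports Defs begin

(* Let E be the cluster set Ecoup of a pair (s, s'). Each plaquette meets the supports of s
   and s' either only inside E or only outside E, and in the latter case it carries no defect
   of s: an edge of a defect plaquette on which s is nonzero seeds E, and edges of one
   plaquette lying in the joint support are adjacent in the graph. Exchanging s and s' on E
   therefore keeps s' curl-free, keeps every plaquette curl of s, only permutes edge values,
   and leaves the graph and its seeds unchanged. So the exchange is a weight-preserving
   involution of configs x configs0 whose second component is the coupled configuration,
   whose law is therefore the second marginal mu_inf. *)

lemma finite_box: "finite (box N)"
proof -
  have "box N \<subseteq> {f. \<forall>i. (i \<in> {..<4::nat} \<longrightarrow> f i \<in> {-int N..int N}) \<and> (i \<notin> {..<4} \<longrightarrow> f i = 0)}"
    by (auto simp: box_def lat_def)
  then show ?thesis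
    by (rule finite_subset) (rule finite_set_of_finite_funs, auto)
qed

lemma finite_edges: "finite (edges N)"
proof -
  have "edges N \<subseteq> box N \<times> box N" by (auto simp: edges_def)
  then show ?thesis using finite_box by (metis finite_SigmaI finite_subset)
qed

lemma finite_configs: "finite (configs N n)"
proof -
  have "configs N n \<subseteq> {f. \<forall>e. (e \<in> edges N \<longrightarrow> f e \<in> {0..<n}) \<and> (e \<notin> edges N \<longrightarrow> f e = 0)}"
    by (auto simp: configs_def)
  then show ?thesis
    by (rule finite_subset) (rule finite_set_of_finite_funs, auto simp: finite_edges)
qed

lemma finite_configs0: "finite (configs0 N n)"
  using finite_configs[of N n] unfolding configs0_def by auto

lemma zero_in_configs0: "0 < n \<Longrightarrow> (\<lambda>_. 0) \<in> configs0 N n"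
  by (auto simp: configs0_def configs_def dcurl_def)

lemma configs0_subset_configs: "configs0 N n \<subseteq> configs N n"
  by (simp add: configs0_def)

lemma rev_edge_in_edges: "e \<in> edges N \<Longrightarrow> rev_edge e \<in> edges N"
  by (auto simp: edges_def rev_edge_def)

lemma rev_edge_rev_edge [simp]: "rev_edge (rev_edge e) = e"
  by (simp add: rev_edge_def)

lemma rev_edge_neq: "e \<in> edges N \<Longrightarrow> rev_edge e \<noteq> e"
  by (auto simp: edges_def rev_edge_def step_def fun_eq_iff)
    (metis add_cancel_left_right zero_neq_one)+

lemma dcurl_cong: "(\<And>e. e \<in> set (bd p) \<Longrightarrow> f e = g e) \<Longrightarrow> dcurl n f p = dcurl n g p"
  unfolding dcurl_def by (metis map_eq_conv)

lemma dcurl_eq_0_if_bd_zero: "(\<And>e. e \<in> set (bd p) \<Longrightarrow> f e = 0) \<Longrightarrow> dcurl n f p = 0"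
  using dcurl_cong[of p f "\<lambda>_. 0" n] by (simp add: dcurl_def)

lemma override_on_in_configs:
  assumes "x \<in> configs N n" "y \<in> configs N n" "\<And>e. rev_edge e \<in> E \<longleftrightarrow> e \<in> E"
  shows "override_on x y E \<in> configs N n"
  using assms unfolding configs_def override_on_def by auto

lemma couple_eq_override_on:
  assumes "s \<in> configs N n" "s' \<in> configs N n"
  shows "couple N n s s' = override_on s s' (Ecoup N n s s')"
proof
  fix e
  have "e \<notin> edges N \<Longrightarrow> s e = 0"
    using assms(1) unfolding configs_def by blast
  moreover have "e \<in> edges N \<Longrightarrow> s e mod n = s e" "e \<in> edges N \<Longrightarrow> s' e mod n = s' e"
    using assms by (auto simp: configs_def)
  moreover have "Ecoup N n s s' \<subseteq> edges N"
    by (auto simp: Ecoup_def comps_meeting_def)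
  ultimately show "couple N n s s' e = override_on s s' (Ecoup N n s s') e"
    by (auto simp: couple_def restr_def override_on_def Let_def)
qed

lemma Ecoup_cgraph_closed:
  assumes "e \<in> Ecoup N n s s'" "(e, e') \<in> cgraph N s s'"
  shows "e' \<in> Ecoup N n s s'"
proof -
  obtain a where "a \<in> supp s \<inter> (\<Union>p \<in> {p \<in> plaqs N. dcurl n s p \<noteq> 0}. set (bd p)) \<inter> edges N"
    "(a, e) \<in> (cgraph N s s')\<^sup>*"
    using assms(1) unfolding Ecoup_def comps_meeting_def by blast
  moreover have "e' \<in> edges N" using assms(2) by (simp add: cgraph_def)
  ultimately show ?thesis
    using assms(2) unfolding Ecoup_def comps_meeting_def by (blast intro: rtrancl_into_rtrancl)
qed

lemma rev_edge_in_Ecoup_iff: "rev_edge e \<in> Ecoup N n s s' \<longleftrightarrow> e \<in> Ecoup N n s s'"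
proof -
  have "rev_edge e \<in> Ecoup N n s s'" if "e \<in> Ecoup N n s s'" for e
  proof -
    have "e \<in> edges N" using that by (simp add: Ecoup_def comps_meeting_def)
    then have "(e, rev_edge e) \<in> cgraph N s s'"
      using rev_edge_in_edges rev_edge_neq by (fastforce simp: cgraph_def)
    then show ?thesis using that Ecoup_cgraph_closed by blast
  qed
  then show ?thesis by (metis rev_edge_rev_edge)
qed

lemma Ecoup_bd_closed:
  assumes "p \<in> plaqs N" "e \<in> set (bd p)" "e' \<in> set (bd p)"
    "e \<in> supp s \<union> supp s'" "e' \<in> supp s \<union> supp s'" "e \<in> Ecoup N n s s'"
  shows "e' \<in> Ecoup N n s s'"
proof (cases "e = e'")
  case False
  with assms have "(e, e') \<in> cgraph N s s'"
    unfolding cgraph_def plaqs_def cobd_def by auto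
  then show ?thesis using assms(6) Ecoup_cgraph_closed by blast
qed (use assms in simp)

lemma defect_meets_Ecoup:
  assumes "p \<in> plaqs N" "dcurl n s p \<noteq> 0"
  obtains e where "e \<in> set (bd p)" "s e \<noteq> 0" "e \<in> Ecoup N n s s'"
proof -
  obtain e where e: "e \<in> set (bd p)" "s e \<noteq> 0"
    using assms(2) dcurl_eq_0_if_bd_zero by blast
  moreover have "e \<in> edges N" using e assms(1) by (auto simp: plaqs_def)
  ultimately have "e \<in> Ecoup N n s s'"
    using assms unfolding Ecoup_def comps_meeting_def by (auto simp: supp_def)
  with e that show ?thesis by blast
qed

lemma plaq_support_inside_or_outside_Ecoup:
  assumes "p \<in> plaqs N"
  shows "(\<forall>e \<in> set (bd p). e \<notin> Ecoup N n s s' \<longrightarrow> s e = 0 \<and> s' e = 0) \<or>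
         (\<forall>e \<in> set (bd p). e \<in> Ecoup N n s s' \<longrightarrow> s e = 0 \<and> s' e = 0) \<and> dcurl n s p = 0"
proof (cases "\<exists>e \<in> set (bd p). (s e \<noteq> 0 \<or> s' e \<noteq> 0) \<and> e \<in> Ecoup N n s s'")
  case True
  then obtain e where e: "e \<in> set (bd p)" "s e \<noteq> 0 \<or> s' e \<noteq> 0" "e \<in> Ecoup N n s s'"
    by blast
  then show ?thesis
    using Ecoup_bd_closed[OF assms e(1) _ _ _ e(3)] by (auto simp: supp_def)
next
  case False
  then have "dcurl n s p = 0" using defect_meets_Ecoup[OF assms] by blast
  with False show ?thesis by blast
qed

lemma defect_support_inside_Ecoup:
  assumes "p \<in> plaqs N" "dcurl n s p \<noteq> 0" "e \<in> set (bd p)" "e \<notin> Ecoup N n s s'"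
  shows "s e = 0 \<and> s' e = 0"
  using plaq_support_inside_or_outside_Ecoup[OF assms(1)] defect_meets_Ecoup[OF assms(1,2)] assms
  by blast

definition Ecoup_swap :: "nat \<Rightarrow> int \<Rightarrow> (edge \<Rightarrow> int) \<times> (edge \<Rightarrow> int) \<Rightarrow> (edge \<Rightarrow> int) \<times> (edge \<Rightarrow> int)"
  where "Ecoup_swap N n = (\<lambda>(s, s'). let E = Ecoup N n s s' in (override_on s' s E, override_on s s' E))"

context
  fixes N :: nat and n :: int and s s' :: "edge \<Rightarrow> int"
  assumes s_config: "s \<in> configs N n" and s'_config0: "s' \<in> configs0 N n"
begin

lemma s'_curl_free: "p \<in> plaqs N \<Longrightarrow> dcurl n s' p = 0"
  using s'_config0 by (simp add: configs0_def)

lemma dcurl_override_fst: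
  assumes "p \<in> plaqs N"
  shows "dcurl n (override_on s' s (Ecoup N n s s')) p = dcurl n s p"
  using plaq_support_inside_or_outside_Ecoup[OF assms, of n s s']
proof
  assume "\<forall>e \<in> set (bd p). e \<notin> Ecoup N n s s' \<longrightarrow> s e = 0 \<and> s' e = 0"
  then show ?thesis by (intro dcurl_cong) (auto simp: override_on_def)
next
  assume inside: "(\<forall>e \<in> set (bd p). e \<in> Ecoup N n s s' \<longrightarrow> s e = 0 \<and> s' e = 0) \<and> dcurl n s p = 0"
  then have "dcurl n (override_on s' s (Ecoup N n s s')) p = dcurl n s' p"
    by (intro dcurl_cong) (auto simp: override_on_def)
  with inside show ?thesis using s'_curl_free[OF assms] by simp
qed

lemma dcurl_override_snd:
  assumes "p \<in> plaqs N"
  shows "dcurl n (override_on s s' (Ecoup N n s s')) p = 0"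
  using plaq_support_inside_or_outside_Ecoup[OF assms, of n s s']
proof
  assume "\<forall>e \<in> set (bd p). e \<notin> Ecoup N n s s' \<longrightarrow> s e = 0 \<and> s' e = 0"
  then have "dcurl n (override_on s s' (Ecoup N n s s')) p = dcurl n s' p"
    by (intro dcurl_cong) (auto simp: override_on_def)
  then show ?thesis using s'_curl_free[OF assms] by simp
next
  assume inside: "(\<forall>e \<in> set (bd p). e \<in> Ecoup N n s s' \<longrightarrow> s e = 0 \<and> s' e = 0) \<and> dcurl n s p = 0"
  then have "dcurl n (override_on s s' (Ecoup N n s s')) p = dcurl n s p"
    by (intro dcurl_cong) (auto simp: override_on_def)
  with inside show ?thesis by simp
qed

lemma override_fst_in_configs: "override_on s' s (Ecoup N n s s') \<in> configs N n"
  using s_config s'_config0 configs0_subset_configs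
  by (intro override_on_in_configs rev_edge_in_Ecoup_iff) auto

lemma override_snd_in_configs0: "override_on s s' (Ecoup N n s s') \<in> configs0 N n"
proof -
  have "override_on s s' (Ecoup N n s s') \<in> configs N n"
    using s_config s'_config0 configs0_subset_configs
    by (intro override_on_in_configs rev_edge_in_Ecoup_iff) auto
  then show ?thesis using dcurl_override_snd by (simp add: configs0_def)
qed

lemma Ecoup_override:
  "Ecoup N n (override_on s' s (Ecoup N n s s')) (override_on s s' (Ecoup N n s s')) = Ecoup N n s s'"
proof -
  have "supp (override_on s' s (Ecoup N n s s')) \<union> supp (override_on s s' (Ecoup N n s s'))
      = supp s \<union> supp s'"
    by (auto simp: supp_def override_on_def)
  then have "cgraph N (override_on s' s (Ecoup N n s s')) (override_on s s' (Ecoup N n s s')) = cgraph N s s'"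
    unfolding cgraph_def by simp
  moreover have "{p \<in> plaqs N. dcurl n (override_on s' s (Ecoup N n s s')) p \<noteq> 0}
      = {p \<in> plaqs N. dcurl n s p \<noteq> 0}"
    using dcurl_override_fst by auto
  moreover have
    "supp (override_on s' s (Ecoup N n s s')) \<inter> (\<Union>p \<in> {p \<in> plaqs N. dcurl n s p \<noteq> 0}. set (bd p))
      = supp s \<inter> (\<Union>p \<in> {p \<in> plaqs N. dcurl n s p \<noteq> 0}. set (bd p))"
    using defect_support_inside_Ecoup[of _ N n s _ s'] by (auto simp: supp_def override_on_def)
  ultimately show ?thesis unfolding Ecoup_def by simp
qed

lemma weight_override:
  "weight N n \<rho> \<beta> \<kappa> (override_on s' s (Ecoup N n s s'))
     * weight_inf N \<rho> \<kappa> (override_on s s' (Ecoup N n s s'))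
     = weight N n \<rho> \<beta> \<kappa> s * weight_inf N \<rho> \<kappa> s'"
proof -
  have plaq_sums: "(\<Sum>p \<in> plaqs N. \<rho> (dcurl n (override_on s' s (Ecoup N n s s')) p))
      = (\<Sum>p \<in> plaqs N. \<rho> (dcurl n s p))"
    using dcurl_override_fst by simp
  have "(\<Sum>e \<in> edges N. \<rho> (override_on s' s (Ecoup N n s s') e))
        + (\<Sum>e \<in> edges N. \<rho> (override_on s s' (Ecoup N n s s') e))
      = (\<Sum>e \<in> edges N. \<rho> (s e)) + (\<Sum>e \<in> edges N. \<rho> (s' e))"
    unfolding sum.distrib[symmetric] by (intro sum.cong) (auto simp: override_on_def)
  then have "Re (\<Sum>e \<in> edges N. \<rho> (override_on s' s (Ecoup N n s s') e))
        + Re (\<Sum>e \<in> edges N. \<rho> (override_on s s' (Ecoup N n s s') e))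
      = Re (\<Sum>e \<in> edges N. \<rho> (s e)) + Re (\<Sum>e \<in> edges N. \<rho> (s' e))"
    by (metis plus_complex.sel(1))
  then show ?thesis
    unfolding weight_def weight_inf_def exp_add[symmetric] plaq_sums
    by (simp add: algebra_simps) (metis distrib_left)
qed

end

lemma Ecoup_swap_in_configs:
  "z \<in> configs N n \<times> configs0 N n \<Longrightarrow> Ecoup_swap N n z \<in> configs N n \<times> configs0 N n"
  by (cases z) (auto simp: Ecoup_swap_def Let_def override_fst_in_configs override_snd_in_configs0)

lemma Ecoup_swap_involution:
  assumes "z \<in> configs N n \<times> configs0 N n"
  shows "Ecoup_swap N n (Ecoup_swap N n z) = z"
proof (cases z)
  case (Pair s s')
  define E where "E = Ecoup N n s s'"
  have "Ecoup N n (override_on s' s E) (override_on s s' E) = E"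
    using assms Pair Ecoup_override unfolding E_def by auto
  then have "Ecoup_swap N n (Ecoup_swap N n z)
      = (override_on (override_on s s' E) (override_on s' s E) E,
         override_on (override_on s' s E) (override_on s s' E) E)"
    by (simp add: Pair Ecoup_swap_def E_def[symmetric])
  also have "\<dots> = z" by (auto simp: Pair override_on_def)
  finally show ?thesis .
qed

lemma mu_Ecoup_swap:
  assumes "z \<in> configs N n \<times> configs0 N n"
  shows "mu N n \<rho> \<beta> \<kappa> (fst (Ecoup_swap N n z)) * mu_inf N n \<rho> \<kappa> (snd (Ecoup_swap N n z))
       = mu N n \<rho> \<beta> \<kappa> (fst z) * mu_inf N n \<rho> \<kappa> (snd z)"
proof (cases z)
  case (Pair s s')
  then show ?thesis
    using assms Ecoup_swap_in_configs[OF assms] weight_override[of s N n s' \<rho> \<beta> \<kappa>]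
    by (auto simp: Ecoup_swap_def Let_def mu_def mu_inf_def)
qed

lemma snd_Ecoup_swap:
  "z \<in> configs N n \<times> configs0 N n \<Longrightarrow> snd (Ecoup_swap N n z) = couple N n (fst z) (snd z)"
  using configs0_subset_configs
  by (cases z) (auto simp: Ecoup_swap_def Let_def couple_eq_override_on subset_iff)

lemma sum_normalized_eq_1:
  fixes w :: "'a \<Rightarrow> real"
  assumes "sum w S \<noteq> 0"
  shows "(\<Sum>x \<in> S. w x / sum w S) = 1"
  using assms by (simp add: sum_divide_distrib[symmetric])

lemma mu_eq_0: "\<sigma> \<notin> configs N n \<Longrightarrow> mu N n \<rho> \<beta> \<kappa> \<sigma> = 0"
  by (simp add: mu_def)

lemma mu_inf_eq_0: "\<sigma> \<notin> configs0 N n \<Longrightarrow> mu_inf N n \<rho> \<kappa> \<sigma> = 0"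
  by (simp add: mu_inf_def)

lemma sum_mu_eq_1:
  assumes "0 < n"
  shows "(\<Sum>s \<in> configs N n. mu N n \<rho> \<beta> \<kappa> s) = 1"
proof -
  have "(\<Sum>\<tau> \<in> configs N n. weight N n \<rho> \<beta> \<kappa> \<tau>) > 0"
    using subsetD[OF configs0_subset_configs zero_in_configs0[OF assms]] finite_configs
    by (intro sum_pos) (auto simp: weight_def)
  then show ?thesis
    using sum_normalized_eq_1[of "weight N n \<rho> \<beta> \<kappa>" "configs N n"]
    by (simp add: mu_def)
qed

lemma sum_mu_inf_eq_1:
  assumes "0 < n"
  shows "(\<Sum>s \<in> configs0 N n. mu_inf N n \<rho> \<kappa> s) = 1"
proof -
  have "(\<Sum>\<tau> \<in> configs0 N n. weight_inf N \<rho> \<kappa> \<tau>) > 0"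
    using zero_in_configs0[OF assms] finite_configs0
    by (intro sum_pos) (auto simp: weight_inf_def)
  then show ?thesis
    using sum_normalized_eq_1[of "weight_inf N \<rho> \<kappa>" "configs0 N n"]
    by (simp add: mu_inf_def)
qed

lemma sum_product_indicator_fst:
  fixes p q :: "'a \<Rightarrow> 'b::comm_semiring_1"
  assumes "finite A"
  shows "(\<Sum>a \<in> A. \<Sum>b \<in> B. p a * q b * (if a = t then 1 else 0))
       = (if t \<in> A then p t else 0) * sum q B"
proof -
  have "(\<Sum>a \<in> A. \<Sum>b \<in> B. p a * q b * (if a = t then 1 else 0))
      = (\<Sum>a \<in> A. if a = t then p a * sum q B else 0)"
    by (intro sum.cong) (auto simp: sum_distrib_left)
  then show ?thesis using assms by (simp add: sum.delta')
qed

lemma sum_product_indicator_snd: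
  fixes p q :: "'a \<Rightarrow> 'b::comm_semiring_1"
  assumes "finite B"
  shows "(\<Sum>a \<in> A. \<Sum>b \<in> B. p a * q b * (if b = t then 1 else 0))
       = sum p A * (if t \<in> B then q t else 0)"
proof -
  have "(\<Sum>a \<in> A. \<Sum>b \<in> B. p a * q b * (if b = t then 1 else 0))
      = (\<Sum>a \<in> A. p a * (\<Sum>b \<in> B. if b = t then q b else 0))"
    by (intro sum.cong) (auto simp: sum_distrib_left intro: sum.cong)
  then show ?thesis using assms by (simp add: sum.delta' sum_distrib_right)
qed

text \<open>The swap preserves the product weight pointwise, so none of the properties of
  \<open>\<rho>\<close>, nor the signs of \<open>\<beta>\<close> and \<open>\<kappa>\<close>, are needed.\<close>

theorem mainTheorem14:
  fixes N :: nat and n :: int and \<rho> :: "int \<Rightarrow> complex" and \<beta> \<kappa> :: real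
  assumes "0 < n"
    and "\<forall>a b. \<rho> (a + b) = \<rho> a * \<rho> b"
    and "\<forall>a. cmod (\<rho> a) = 1"
    and "\<forall>a. \<rho> a = 1 \<longleftrightarrow> n dvd a"
    and "\<beta> \<ge> 0" and "\<kappa> \<ge> 0"
  shows "(\<forall>\<tau>. (\<Sum>s \<in> configs N n. \<Sum>s' \<in> configs0 N n.
              mu N n \<rho> \<beta> \<kappa> s * mu_inf N n \<rho> \<kappa> s' * (if couple N n s s' = \<tau> then 1 else 0))
            = mu_inf N n \<rho> \<kappa> \<tau>)
       \<and> (\<forall>\<tau>. (\<Sum>s \<in> configs N n. \<Sum>s' \<in> configs0 N n.
              mu N n \<rho> \<beta> \<kappa> s * mu_inf N n \<rho> \<kappa> s' * (if s = \<tau> then 1 else 0))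
            = mu N n \<rho> \<beta> \<kappa> \<tau>)"
proof (intro conjI allI)
  fix \<tau>
  let ?m = "mu N n \<rho> \<beta> \<kappa>" and ?mi = "mu_inf N n \<rho> \<kappa>"
  have "(\<Sum>s \<in> configs N n. \<Sum>s' \<in> configs0 N n. ?m s * ?mi s' * (if couple N n s s' = \<tau> then 1 else 0))
      = (\<Sum>z \<in> configs N n \<times> configs0 N n.
           ?m (fst z) * ?mi (snd z) * (if couple N n (fst z) (snd z) = \<tau> then 1 else 0))"
    by (simp add: sum.cartesian_product case_prod_beta)
  also have "\<dots> = (\<Sum>z \<in> configs N n \<times> configs0 N n.
           ?m (fst z) * ?mi (snd z) * (if snd z = \<tau> then 1 else 0))"
    using Ecoup_swap_in_configs Ecoup_swap_involution mu_Ecoup_swap snd_Ecoup_swap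
    by (intro sum.reindex_bij_witness[where i = "Ecoup_swap N n" and j = "Ecoup_swap N n"]) auto
  also have "\<dots> = (\<Sum>s \<in> configs N n. \<Sum>s' \<in> configs0 N n. ?m s * ?mi s' * (if s' = \<tau> then 1 else 0))"
    by (simp add: sum.cartesian_product case_prod_beta)
  also have "\<dots> = ?mi \<tau>"
    unfolding sum_product_indicator_snd[OF finite_configs0] sum_mu_eq_1[OF assms(1)]
    using mu_inf_eq_0 by simp
  finally show "(\<Sum>s \<in> configs N n. \<Sum>s' \<in> configs0 N n.
      ?m s * ?mi s' * (if couple N n s s' = \<tau> then 1 else 0)) = ?mi \<tau>" .
  show "(\<Sum>s \<in> configs N n. \<Sum>s' \<in> configs0 N n. ?m s * ?mi s' * (if s = \<tau> then 1 else 0)) = ?m \<tau>"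
    unfolding sum_product_indicator_fst[OF finite_configs] sum_mu_inf_eq_1[OF assms(1)]
    using mu_eq_0 by simp
qed

end
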